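(* Let $\mathcal{Q}=(Q,\leq^Q)$ with $Q=\{1,\dots,k\}$ and $\mathcal{P}=(P,\leq^P)$ be finite posets, $(C_1,\dots,C_w)$ a chain partition of $\mathcal{P}$, $f:Q\to\{1,\dots,w\}$, and $G=G(\mathcal{P},\mathcal{Q},f)$ the graph with vertex set $V_1\,\dot\cup\cdots\dot\cup\, V_k$, $V_i$ a copy of $C_{f(i)}$, where for copies $p\in V_i$, $q\in V_j$ of $p'\in C_{f(i)}$, $q'\in C_{f(j)}$, $pq\in E(G)$ iff $i\neq j$, ($p'\leq^P q'$ iff $i\leq^Q j$) and ($p'\geq^P q'$ iff $i\geq^Q j$). Equip each $V_i$ with the linear order $\leq^G$ inherited from the chain $C_{f(i)}$ under $\leq^P$. Let $i,j\in Q$ with $i\neq j$. Then: (i) for any $p\in V_i$ and $q_1,q_2,q_3\in V_j$ with $q_1\leq^G q_2\leq^G q_3$, if $pq_1,pq_3\in E(G)$ then $pq_2\in E(G)$; (ii) for any $p_1,p_2\in V_i$ and $q_1,q_2\in V_j$ with $p_1\leq^G p_2$ and $q_1\leq^G q_2$, if $p_1q_2,p_2q_1\in E(G)$ then $p_1q_1,p_2q_2\in E(G)$.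
   Context: A chain partition of $\mathcal{P}$ is a partition of $P$ into chains (sets of pairwise comparable elements under $\leq^P$). *)

theory Defs
  imports Main
begin

definition partial_order_on_set :: "'a set \<Rightarrow> ('a \<Rightarrow> 'a \<Rightarrow> bool) \<Rightarrow> bool" where
  "partial_order_on_set A le \<longleftrightarrow>
     (\<forall>x\<in>A. le x x) \<and>
     (\<forall>x\<in>A. \<forall>y\<in>A. le x y \<and> le y x \<longrightarrow> x = y) \<and>
     (\<forall>x\<in>A. \<forall>y\<in>A. \<forall>z\<in>A. le x y \<and> le y z \<longrightarrow> le x z)"

definition is_chain :: "('a \<Rightarrow> 'a \<Rightarrow> bool) \<Rightarrow> 'a set \<Rightarrow> bool" where
  "is_chain le C \<longleftrightarrow> (\<forall>x\<in>C. \<forall>y\<in>C. le x y \<or> le y x)"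

definition chain_partition :: "'a set \<Rightarrow> ('a \<Rightarrow> 'a \<Rightarrow> bool) \<Rightarrow> nat \<Rightarrow> (nat \<Rightarrow> 'a set) \<Rightarrow> bool" where
  "chain_partition P le w C \<longleftrightarrow>
     (\<forall>c\<in>{1..w}. C c \<noteq> {} \<and> C c \<subseteq> P \<and> is_chain le (C c)) \<and>
     (\<forall>c\<in>{1..w}. \<forall>d\<in>{1..w}. c \<noteq> d \<longrightarrow> C c \<inter> C d = {}) \<and>
     (\<Union>c\<in>{1..w}. C c) = P"

text \<open>Vertices of G(P,Q,f): the vertex (i,p) is the copy in V_i of p in C (f i).\<close>
definition G_vertices :: "nat \<Rightarrow> (nat \<Rightarrow> 'a set) \<Rightarrow> (nat \<Rightarrow> nat) \<Rightarrow> (nat \<times> 'a) set" where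
  "G_vertices k C f = {(i, p). i \<in> {1..k} \<and> p \<in> C (f i)}"

definition G_edge :: "nat \<Rightarrow> ('a \<Rightarrow> 'a \<Rightarrow> bool) \<Rightarrow> (nat \<Rightarrow> nat \<Rightarrow> bool) \<Rightarrow> (nat \<Rightarrow> 'a set) \<Rightarrow> (nat \<Rightarrow> nat)
    \<Rightarrow> nat \<times> 'a \<Rightarrow> nat \<times> 'a \<Rightarrow> bool" where
  "G_edge k leP leQ C f u v \<longleftrightarrow>
     u \<in> G_vertices k C f \<and> v \<in> G_vertices k C f \<and>
     (case u of (i, p) \<Rightarrow> case v of (j, q) \<Rightarrow>
        i \<noteq> j \<and> (leP p q \<longleftrightarrow> leQ i j) \<and> (leP q p \<longleftrightarrow> leQ j i))"

definition G_le :: "('a \<Rightarrow> 'a \<Rightarrow> bool) \<Rightarrow> nat \<times> 'a \<Rightarrow> nat \<times> 'a \<Rightarrow> bool" where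
  "G_le leP u v \<longleftrightarrow> fst u = fst v \<and> leP (snd u) (snd v)"

end

theory Submission
  imports Defs
begin

text \<open>An edge between the copies of p and q in V_i and V_j says precisely that p and q are
  comparable in P in the same way as i and j are in Q. Both claims are then statements about
  a fixed comparability pattern along chains, and each follows from transitivity of the order
  on P alone: neither antisymmetry, finiteness nor the order on Q plays any role.\<close>

definition comparability :: "('a \<Rightarrow> 'a \<Rightarrow> bool) \<Rightarrow> 'a \<Rightarrow> 'a \<Rightarrow> bool \<times> bool" where
  "comparability le x y = (le x y, le y x)"

lemma comparability_eq_convex:
  assumes trans: "transp_on A le"
    and in_A: "p \<in> A" "q1 \<in> A" "q2 \<in> A" "q3 \<in> A"
    and le: "le q1 q2" "le q2 q3"
    and c1: "comparability le p q1 = c" and c3: "comparability le p q3 = c"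
  shows "comparability le p q2 = c"
proof -
  note tr = transp_onD[OF trans]
  have "le p q2 \<longleftrightarrow> le p q1"
    using c1 c3 tr[of p q1 q2] tr[of p q2 q3] le in_A by (auto simp: comparability_def)
  moreover have "le q2 p \<longleftrightarrow> le q1 p"
    using c1 c3 tr[of q1 q2 p] tr[of q2 q3 p] le in_A by (auto simp: comparability_def)
  ultimately show ?thesis
    using c1 by (simp add: comparability_def)
qed

lemma comparability_eq_uncross:
  assumes trans: "transp_on A le"
    and in_A: "p1 \<in> A" "p2 \<in> A" "q1 \<in> A" "q2 \<in> A"
    and le: "le p1 p2" "le q1 q2"
    and c12: "comparability le p1 q2 = c" and c21: "comparability le p2 q1 = c"
  shows "comparability le p1 q1 = c \<and> comparability le p2 q2 = c"
proof -
  note tr = transp_onD[OF trans]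
  have "le p1 q1 \<longleftrightarrow> le p1 q2" "le q1 p1 \<longleftrightarrow> le q2 p1"
    using c12 c21 tr[of p1 p2 q1] tr[of p1 q1 q2] tr[of q1 q2 p1] tr[of q1 p1 p2] le in_A
    by (auto simp: comparability_def)
  moreover have "le p2 q2 \<longleftrightarrow> le p1 q2" "le q2 p2 \<longleftrightarrow> le q2 p1"
    using c12 c21 tr[of p2 q1 q2] tr[of p1 p2 q2] tr[of q1 q2 p2] tr[of q2 p1 p2] le in_A
    by (auto simp: comparability_def)
  ultimately show ?thesis
    using c12 by (simp add: comparability_def)
qed

lemma G_edge_iff_comparability:
  "G_edge k leP leQ C f (i, p) (j, q) \<longleftrightarrow>
     i \<in> {1..k} \<and> j \<in> {1..k} \<and> p \<in> C (f i) \<and> q \<in> C (f j) \<and> i \<noteq> j \<and>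
     comparability leP p q = comparability leQ i j"
  unfolding G_edge_def G_vertices_def comparability_def by (simp add: conj_ac)

theorem lemma4p2:
  fixes P :: "'a set" and leP :: "'a \<Rightarrow> 'a \<Rightarrow> bool"
    and k :: nat and leQ :: "nat \<Rightarrow> nat \<Rightarrow> bool"
    and w :: nat and C :: "nat \<Rightarrow> 'a set" and f :: "nat \<Rightarrow> nat"
    and i j :: nat
  assumes finP: "finite P"
    and poP: "partial_order_on_set P leP"
    and poQ: "partial_order_on_set {1..k} leQ"
    and cp: "chain_partition P leP w C"
    and f_range: "\<forall>x\<in>{1..k}. f x \<in> {1..w}"
    and ij: "i \<in> {1..k}" "j \<in> {1..k}" "i \<noteq> j"
  shows "(\<forall>p\<in>C (f i). \<forall>q1\<in>C (f j). \<forall>q2\<in>C (f j). \<forall>q3\<in>C (f j).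
            G_le leP (j, q1) (j, q2) \<and> G_le leP (j, q2) (j, q3) \<and>
            G_edge k leP leQ C f (i, p) (j, q1) \<and> G_edge k leP leQ C f (i, p) (j, q3)
            \<longrightarrow> G_edge k leP leQ C f (i, p) (j, q2))
       \<and> (\<forall>p1\<in>C (f i). \<forall>p2\<in>C (f i). \<forall>q1\<in>C (f j). \<forall>q2\<in>C (f j).
            G_le leP (i, p1) (i, p2) \<and> G_le leP (j, q1) (j, q2) \<and>
            G_edge k leP leQ C f (i, p1) (j, q2) \<and> G_edge k leP leQ C f (i, p2) (j, q1)
            \<longrightarrow> G_edge k leP leQ C f (i, p1) (j, q1) \<and> G_edge k leP leQ C f (i, p2) (j, q2))"
proof -
  have trans: "transp_on P leP"
    using poP unfolding partial_order_on_set_def transp_on_def by blast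
  have sub: "C (f i) \<subseteq> P" "C (f j) \<subseteq> P"
    using cp f_range ij unfolding chain_partition_def by auto
  show ?thesis
  proof (rule conjI; intro ballI impI)
    fix p q1 q2 q3
    assume "p \<in> C (f i)" "q1 \<in> C (f j)" "q2 \<in> C (f j)" "q3 \<in> C (f j)"
      and "G_le leP (j, q1) (j, q2) \<and> G_le leP (j, q2) (j, q3) \<and>
        G_edge k leP leQ C f (i, p) (j, q1) \<and> G_edge k leP leQ C f (i, p) (j, q3)"
    then show "G_edge k leP leQ C f (i, p) (j, q2)"
      using comparability_eq_convex[OF trans, of p q1 q2 q3 "comparability leQ i j"] sub
      by (auto simp: G_edge_iff_comparability G_le_def)
  next
    fix p1 p2 q1 q2
    assume "p1 \<in> C (f i)" "p2 \<in> C (f i)" "q1 \<in> C (f j)" "q2 \<in> C (f j)"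
      and "G_le leP (i, p1) (i, p2) \<and> G_le leP (j, q1) (j, q2) \<and>
        G_edge k leP leQ C f (i, p1) (j, q2) \<and> G_edge k leP leQ C f (i, p2) (j, q1)"
    then show "G_edge k leP leQ C f (i, p1) (j, q1) \<and> G_edge k leP leQ C f (i, p2) (j, q2)"
      using comparability_eq_uncross[OF trans, of p1 p2 q1 q2 "comparability leQ i j"] sub
      by (auto simp: G_edge_iff_comparability G_le_def)
  qed
qed

end
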